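(* For every constant $p\in(0,1)$ there exist bipartite graphs $G$ with $n$ vertices on each side (for all sufficiently large $n$) such that $\mathbb{E}[\mu(G_p)]\ge n-o(n)$, but for every $b\ge 2/p$, $G$ contains no $b$-matching with at least $0.99\,b\,n$ edges.
   Context: A realization $G_p$ of $G$ keeps each edge independently with probability $p$; $\mu(X)$ is the maximum matching size of $X$. A $b$-matching is a set of edges in which every vertex is incident to at most $b$ edges; $o(n)$ refers to $n\to\infty$ with $p$ fixed. *)

theory Defs
  imports "HOL-Probability.Probability" "HOL-Library.Landau_Symbols"
begin

text \<open>A bipartite graph with n vertices on each side is represented by its edge set
  E \<subseteq> {..<n} \<times> {..<n}; an edge (i,j) joins left vertex i with right vertex j.\<close>

definition b_matching :: "nat \<Rightarrow> (nat \<times> nat) set \<Rightarrow> bool" where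
  "b_matching b M \<longleftrightarrow>
     (\<forall>i. card {e \<in> M. fst e = i} \<le> b) \<and> (\<forall>j. card {e \<in> M. snd e = j} \<le> b)"

definition is_matching :: "(nat \<times> nat) set \<Rightarrow> bool" where
  "is_matching M \<longleftrightarrow> b_matching 1 M"

definition mu :: "(nat \<times> nat) set \<Rightarrow> nat" where
  "mu H = Max {card M | M. M \<subseteq> H \<and> is_matching M}"

definition realization :: "real \<Rightarrow> (nat \<times> nat) set \<Rightarrow> ((nat \<times> nat) \<Rightarrow> bool) pmf" where
  "realization p E = Pi_pmf E False (\<lambda>_. bernoulli_pmf p)"

definition expected_mu :: "real \<Rightarrow> (nat \<times> nat) set \<Rightarrow> real" where
  "expected_mu p E =
     measure_pmf.expectation (realization p E) (\<lambda>x. real (mu {e \<in> E. x e}))"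

end

theory Submission
  imports Defs
begin

text \<open>Take \<open>t \<approx> 0.12/p\<close>, \<open>u \<approx> 12n/25\<close> (\<open>hubs n\<close>) and \<open>a = n - u\<close> (\<open>core n\<close>). The graph \<open>G\<close>
  consists of all edges at the last \<open>u\<close> vertices of either side (the hubs), together with about
  \<open>0.057 n/(t\<^sup>2 p)\<close> disjoint copies of \<open>K\<^sub>t\<^sub>,\<^sub>t\<close> among the first \<open>a\<close> vertices. A \<open>b\<close>-matching
  uses at most \<open>b u\<close> edges at the hubs of each side and at most \<open>0.057 n/p \<le> 0.0285 b n\<close> block
  edges, fewer than \<open>0.99 b n\<close> in total.

  In \<open>G\<^sub>p\<close> the block edges that survive while all their neighbours inside the block die form a
  matching \<open>Q\<close>. Since \<open>(1-p)\<^bsup>2(t-1)\<^esup> \<ge> 0.76\<close>, its expected size exceeds \<open>2a - n\<close> by a linear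
  margin, and as edges of different blocks are independent its variance is \<open>O(n)\<close>, so
  \<open>Q\<close> falls short of \<open>2a - n\<close> by only \<open>O(1)\<close> in expectation. Starting from \<open>Q\<close>, the low left vertices
  are greedily matched into the hubs and the hub left vertices into anything. At most
  \<open>s + max 0 (2a - n - |Q|)\<close> vertices then stay unmatched besides the stuck ones, which still see
  more than \<open>s\<close> free candidates but none of whose edges to them survived. These edges have not
  been inspected before, so a vertex is stuck with probability at most \<open>(1-p)\<^bsup>s+1\<^esup>\<close>, whence
  \<open>E \<mu>(G\<^sub>p) \<ge> n - s - O(1) - n (1-p)\<^bsup>s+1\<^esup>\<close> for every \<open>s\<close>.\<close>

section \<open>Products of Bernoulli distributions\<close>

lemma prob_Pi_bernoulli_cylinder:
  fixes E T F :: "'e set"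
  assumes fin: "finite E" and TE: "T \<subseteq> E" and FE: "F \<subseteq> E" and TF: "T \<inter> F = {}"
    and p: "0 \<le> p" "p \<le> 1"
  shows "measure_pmf.prob (Pi_pmf E False (\<lambda>_. bernoulli_pmf p))
           {x. (\<forall>e\<in>T. x e) \<and> (\<forall>e\<in>F. \<not> x e)} = p ^ card T * (1 - p) ^ card F"
proof -
  define B where "B = (\<lambda>e. if e \<in> T then {True} else if e \<in> F then {False} else (UNIV::bool set))"
  define q where "q = (\<lambda>e. if e \<in> T then p else if e \<in> F then 1 - p else 1)"
  have "{x. (\<forall>e\<in>T. x e) \<and> (\<forall>e\<in>F. \<not> x e)} = Pi E B"
    using TE FE TF by (auto simp: B_def Pi_def split: if_splits)
  hence "measure_pmf.prob (Pi_pmf E False (\<lambda>_. bernoulli_pmf p))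
           {x. (\<forall>e\<in>T. x e) \<and> (\<forall>e\<in>F. \<not> x e)} = (\<Prod>e\<in>E. measure_pmf.prob (bernoulli_pmf p) (B e))"
    using fin by (simp add: measure_Pi_pmf_Pi)
  also have "\<dots> = (\<Prod>e\<in>E. q e)"
    using p by (intro prod.cong refl) (auto simp: B_def q_def measure_pmf_single)
  also have "\<dots> = (\<Prod>e\<in>T \<union> F. q e)"
    using TE FE fin by (intro prod.mono_neutral_right) (auto simp: q_def)
  also have "\<dots> = (\<Prod>e\<in>T. q e) * (\<Prod>e\<in>F. q e)"
    using TE FE fin TF by (intro prod.union_disjoint) (auto dest: finite_subset)
  also have "\<dots> = (\<Prod>e\<in>T. p) * (\<Prod>e\<in>F. 1 - p)"
    using TF by (intro arg_cong2[where f="(*)"] prod.cong) (auto simp: q_def)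
  also have "\<dots> = p ^ card T * (1 - p) ^ card F"
    by simp
  finally show ?thesis .
qed

lemma prob_pair_pmf_le_slices:
  assumes slice: "\<And>a. measure_pmf.prob B {b. (a, b) \<in> S} \<le> c"
  shows "measure_pmf.prob (pair_pmf A B) S \<le> c"
proof -
  have c: "0 \<le> c" using order_trans[OF measure_nonneg slice] .
  have "emeasure (pair_pmf A B) S = (\<integral>\<^sup>+z. indicator S z \<partial>pair_pmf A B)"
    by simp
  also have "\<dots> = (\<integral>\<^sup>+a. \<integral>\<^sup>+b. indicator {b. (a, b) \<in> S} b \<partial>B \<partial>A)"
    by (subst nn_integral_pair_pmf') (intro nn_integral_cong, simp add: indicator_def)
  also have "\<dots> = (\<integral>\<^sup>+a. emeasure B {b. (a, b) \<in> S} \<partial>A)"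
    by (intro nn_integral_cong nn_integral_indicator) simp
  also have "\<dots> \<le> (\<integral>\<^sup>+a. ennreal c \<partial>A)"
    using slice by (intro nn_integral_mono) (simp add: measure_pmf.emeasure_eq_measure ennreal_leI)
  also have "\<dots> = ennreal c"
    by (simp add: measure_pmf.emeasure_space_1)
  finally show ?thesis
    using c by (simp add: measure_pmf.emeasure_eq_measure)
qed

text \<open>Conditioning on the coordinates outside \<open>D\<close> fixes \<open>A x\<close>, while the coordinates in \<open>D\<close>
  remain independent Bernoulli variables.\<close>
lemma prob_Pi_bernoulli_absent_set:
  fixes E D :: "'e set" and A :: "('e \<Rightarrow> bool) \<Rightarrow> 'e set"
  assumes fin: "finite E" and DE: "D \<subseteq> E" and p: "0 \<le> p" "p \<le> 1"
    and AD: "\<And>x. A x \<subseteq> D"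
    and A_local: "\<And>x y. (\<And>e. e \<in> E - D \<Longrightarrow> x e = y e) \<Longrightarrow> A x = A y"
  shows "measure_pmf.prob (Pi_pmf E False (\<lambda>_. bernoulli_pmf p))
           {x. s < card (A x) \<and> (\<forall>e\<in>A x. \<not> x e)} \<le> (1 - p) ^ Suc s"
proof -
  define S where "S = {x. s < card (A x) \<and> (\<forall>e\<in>A x. \<not> x e)}"
  define h where "h = (\<lambda>(f::'e\<Rightarrow>bool, g::'e\<Rightarrow>bool) y. if y \<in> E - D then f y else g y)"
  define PD where "PD = Pi_pmf D False (\<lambda>_. bernoulli_pmf p)"
  have finD: "finite D" using fin DE by (rule finite_subset[rotated])
  have EU: "E = (E - D) \<union> D" using DE by auto
  have "Pi_pmf E False (\<lambda>_. bernoulli_pmf p)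
          = map_pmf h (pair_pmf (Pi_pmf (E - D) False (\<lambda>_. bernoulli_pmf p)) PD)"
    unfolding h_def PD_def by (subst EU, rule Pi_pmf_union) (use fin finD in auto)
  hence "measure_pmf.prob (Pi_pmf E False (\<lambda>_. bernoulli_pmf p)) S
          = measure_pmf.prob (pair_pmf (Pi_pmf (E - D) False (\<lambda>_. bernoulli_pmf p)) PD) (h -` S)"
    by (simp add: measure_map_pmf)
  also have "\<dots> \<le> (1 - p) ^ Suc s"
  proof (rule prob_pair_pmf_le_slices)
    fix f
    define C where "C = A (h (f, \<lambda>_. False))"
    have AC: "A (h (f, g)) = C" for g
      unfolding C_def by (rule A_local) (auto simp: h_def)
    have "C \<subseteq> D" using AD by (simp add: C_def)
    hence "h (f, g) e = g e" if "e \<in> C" for g e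
      using that by (auto simp: h_def)
    hence slice: "{g. (f, g) \<in> h -` S} = (if s < card C then {g. \<forall>e\<in>C. \<not> g e} else {})"
      by (auto simp: S_def AC)
    show "measure_pmf.prob PD {g. (f, g) \<in> h -` S} \<le> (1 - p) ^ Suc s"
    proof (cases "s < card C")
      case True
      have "measure_pmf.prob PD {g. \<forall>e\<in>C. \<not> g e} = (1 - p) ^ card C"
        using prob_Pi_bernoulli_cylinder[OF finD empty_subsetI \<open>C \<subseteq> D\<close> _ p] by (simp add: PD_def)
      also have "\<dots> \<le> (1 - p) ^ Suc s"
        using True p by (intro power_decreasing) auto
      finally show ?thesis using True slice by simp
    qed (use slice p in simp)
  qed
  finally show ?thesis by (simp add: S_def)
qed

lemma finite_set_pmf_Pi_bernoulli:
  "finite E \<Longrightarrow> finite (set_pmf (Pi_pmf E False (\<lambda>_. bernoulli_pmf p)))"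
  by (rule finite_subset[OF set_Pi_pmf_subset']) (auto intro!: finite_PiE_dflt)

lemma expectation_sum_indicators_sq_dev:
  fixes M :: "'a pmf" and A :: "'i \<Rightarrow> 'a set"
  assumes I: "finite I" and M: "finite (set_pmf M)"
  shows "measure_pmf.expectation M
           (\<lambda>x. ((\<Sum>i\<in>I. indicator (A i) x) - (\<Sum>i\<in>I. measure_pmf.prob M (A i)))\<^sup>2 :: real)
       = (\<Sum>i\<in>I. \<Sum>j\<in>I. measure_pmf.prob M (A i \<inter> A j)
                          - measure_pmf.prob M (A i) * measure_pmf.prob M (A j))"
proof -
  let ?E = "measure_pmf.expectation M" and ?P = "measure_pmf.prob M"
  define Z where "Z = (\<lambda>x. \<Sum>i\<in>I. indicator (A i) x :: real)"
  define m where "m = (\<Sum>i\<in>I. ?P (A i))"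
  have int: "integrable M f" for f :: "'a \<Rightarrow> real"
    using M by (rule integrable_measure_pmf_finite)
  have EZ: "?E Z = m"
    unfolding Z_def m_def using int by (subst Bochner_Integration.integral_sum) auto
  have "(\<lambda>x. (Z x)\<^sup>2) = (\<lambda>x. \<Sum>i\<in>I. \<Sum>j\<in>I. indicator (A i \<inter> A j) x)"
    by (simp add: Z_def power2_eq_square sum_product indicator_inter_arith)
  hence EZ2: "?E (\<lambda>x. (Z x)\<^sup>2) = (\<Sum>i\<in>I. \<Sum>j\<in>I. ?P (A i \<inter> A j))"
    using int by (simp add: Bochner_Integration.integral_sum)
  have "(\<lambda>x. (Z x - m)\<^sup>2) = (\<lambda>x. (Z x)\<^sup>2 - 2 * m * Z x + m\<^sup>2)"
    by (simp add: power2_eq_square algebra_simps)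
  hence "?E (\<lambda>x. (Z x - m)\<^sup>2) = ?E (\<lambda>x. (Z x)\<^sup>2) - 2 * m * ?E Z + m\<^sup>2"
    using int by simp
  also have "\<dots> = (\<Sum>i\<in>I. \<Sum>j\<in>I. ?P (A i \<inter> A j)) - (\<Sum>i\<in>I. \<Sum>j\<in>I. ?P (A i) * ?P (A j))"
    unfolding EZ EZ2 by (simp add: m_def power2_eq_square sum_product)
  finally show ?thesis
    by (simp add: Z_def m_def sum_subtractf)
qed

lemma expectation_shortfall_le:
  fixes M :: "'a pmf" and Z :: "'a \<Rightarrow> real"
  assumes M: "finite (set_pmf M)" and w: "w < m"
  shows "measure_pmf.expectation M (\<lambda>x. max 0 (w - Z x))
           \<le> measure_pmf.expectation M (\<lambda>x. (Z x - m)\<^sup>2) / (m - w)"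
proof -
  have pt: "max 0 (w - Z x) \<le> (Z x - m)\<^sup>2 / (m - w)" for x
  proof (cases "Z x \<le> w")
    case True
    have "(w - Z x) * (m - w) \<le> (m - Z x) * (m - Z x)"
      using True w by (intro mult_mono) auto
    thus ?thesis using True w by (simp add: field_simps power2_eq_square)
  qed (use w in simp)
  have "measure_pmf.expectation M (\<lambda>x. max 0 (w - Z x))
      \<le> measure_pmf.expectation M (\<lambda>x. (Z x - m)\<^sup>2 / (m - w))"
    by (intro integral_mono integrable_measure_pmf_finite M pt)
  thus ?thesis by simp
qed

section \<open>Matchings and the greedy algorithm\<close>

lemma is_matching_if_inj:
  assumes "finite M" "inj_on fst M" "inj_on snd M"
  shows "is_matching M"
  unfolding is_matching_def b_matching_def
proof (intro conjI allI)
  have "card {e \<in> M. g e = i} \<le> Suc 0" if "inj_on g M" for g :: "nat \<times> nat \<Rightarrow> nat" and i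
    using assms(1) that by (subst card_le_Suc0_iff_eq) (auto simp: inj_on_def)
  thus "card {e \<in> M. fst e = i} \<le> 1" "card {e \<in> M. snd e = i} \<le> 1" for i
    using assms(2,3) by (simp_all only: One_nat_def)
qed

lemma inj_on_fst_if_is_matching:
  assumes "finite M" "is_matching M"
  shows "inj_on fst M"
proof (rule inj_onI)
  fix e f assume e: "e \<in> M" and f: "f \<in> M" and ef: "fst e = fst f"
  have "card {g \<in> M. fst g = fst e} \<le> Suc 0"
    using assms(2) unfolding is_matching_def b_matching_def by simp
  hence "\<forall>a\<in>{g \<in> M. fst g = fst e}. \<forall>b\<in>{g \<in> M. fst g = fst e}. a = b"
    using assms(1) by (subst (asm) card_le_Suc0_iff_eq) auto
  moreover have "e \<in> {g \<in> M. fst g = fst e}" "f \<in> {g \<in> M. fst g = fst e}" using e f ef by auto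
  ultimately show "e = f" by blast
qed

lemma finite_matching_sizes: "finite H \<Longrightarrow> finite {card M | M. M \<subseteq> H \<and> is_matching M}"
  by (rule finite_subset[of _ "card ` Pow H"]) auto

lemma card_le_mu:
  assumes "finite H" "M \<subseteq> H" "is_matching M"
  shows "card M \<le> mu H"
  unfolding mu_def using assms finite_matching_sizes[OF assms(1)] by (intro Max_ge) auto

lemma mu_le:
  assumes "finite H" "H \<subseteq> {..<n} \<times> {..<n}"
  shows "mu H \<le> n"
  unfolding mu_def
proof (rule Max.boundedI)
  show "finite {card M | M. M \<subseteq> H \<and> is_matching M}"
    using assms(1) by (rule finite_matching_sizes)
  have "is_matching {}" unfolding is_matching_def b_matching_def by simp
  thus "{card M | M. M \<subseteq> H \<and> is_matching M} \<noteq> {}" by auto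
  fix c assume "c \<in> {card M | M. M \<subseteq> H \<and> is_matching M}"
  then obtain M where M: "c = card M" "M \<subseteq> H" "is_matching M" by auto
  have "finite M" using M(2) assms(1) by (rule finite_subset)
  hence "card M = card (fst ` M)" using inj_on_fst_if_is_matching M(3) by (simp add: card_image)
  also have "\<dots> \<le> card {..<n}" using M(2) assms(2) by (intro card_mono) auto
  finally show "c \<le> n" using M by simp
qed

lemma card_filter_le_mult:
  fixes g :: "'a \<Rightarrow> 'b"
  assumes "finite I" and "\<And>i. card {e \<in> M. g e = i} \<le> b"
  shows "card {e \<in> M. g e \<in> I} \<le> b * card I"
proof -
  have "card {e \<in> M. g e \<in> I} = card (\<Union>i\<in>I. {e \<in> M. g e = i})"
    by (rule arg_cong[where f = card]) auto
  also have "\<dots> \<le> (\<Sum>i\<in>I. card {e \<in> M. g e = i})"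
    by (rule card_UN_le) (rule assms(1))
  also have "\<dots> \<le> b * card I"
    using assms(2) sum_bounded_above[of I "\<lambda>i. card {e \<in> M. g e = i}" b] by (simp add: mult.commute)
  finally show ?thesis .
qed

definition adjacent_edges :: "(nat \<times> nat) set \<Rightarrow> nat \<times> nat \<Rightarrow> (nat \<times> nat) set" where
  "adjacent_edges P e = {f\<in>P. f \<noteq> e \<and> (fst f = fst e \<or> snd f = snd e)}"

definition isolated_edges :: "(nat \<times> nat) set \<Rightarrow> (nat \<times> nat \<Rightarrow> bool) \<Rightarrow> (nat \<times> nat) set" where
  "isolated_edges P x = {e\<in>P. x e \<and> (\<forall>f\<in>adjacent_edges P e. \<not> x f)}"

lemma inj_on_isolated_edges:
  "inj_on fst (isolated_edges P x)" "inj_on snd (isolated_edges P x)"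
  unfolding isolated_edges_def adjacent_edges_def by (fastforce intro!: inj_onI)+

lemma adjacent_edges_subset: "adjacent_edges P e \<subseteq> P"
  unfolding adjacent_edges_def by auto

lemma not_in_adjacent_edges: "e \<notin> adjacent_edges P e"
  unfolding adjacent_edges_def by auto

text \<open>The state is the pair (used right vertices, matching).\<close>

definition greedy_cand :: "nat \<Rightarrow> nat \<Rightarrow> nat \<Rightarrow> nat set" where
  "greedy_cand a n i = (if i < a then {a..<n} else {..<n})"

fun greedy :: "(nat \<times> nat) set \<Rightarrow> nat \<Rightarrow> nat \<Rightarrow> (nat \<times> nat \<Rightarrow> bool) \<Rightarrow> nat
    \<Rightarrow> nat set \<times> (nat \<times> nat) set" where
  "greedy Q a n x 0 = (snd ` Q, Q)"
| "greedy Q a n x (Suc i) = (let (U, M) = greedy Q a n x i in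
     if i \<notin> fst ` Q \<and> (\<exists>j\<in>greedy_cand a n i - U. x (i,j)) then
        (let j = (LEAST j. j \<in> greedy_cand a n i - U \<and> x (i,j)) in (insert j U, insert (i,j) M))
     else (U, M))"

definition greedy_step :: "(nat \<times> nat) set \<Rightarrow> nat \<Rightarrow> nat \<Rightarrow> (nat \<times> nat \<Rightarrow> bool) \<Rightarrow> nat \<Rightarrow> bool"
  where "greedy_step Q a n x i \<longleftrightarrow>
    i \<notin> fst ` Q \<and> (\<exists>j\<in>greedy_cand a n i - fst (greedy Q a n x i). x (i,j))"

definition greedy_free :: "(nat \<times> nat) set \<Rightarrow> nat \<Rightarrow> nat \<Rightarrow> (nat \<times> nat \<Rightarrow> bool) \<Rightarrow> nat \<Rightarrow> nat set"
  where "greedy_free Q a n x k =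
    (if k \<in> fst ` Q then {} else greedy_cand a n k - fst (greedy Q a n x k))"

lemma greedy_cong:
  assumes "\<And>i' j. i' < i \<Longrightarrow> j \<in> greedy_cand a n i' \<Longrightarrow> x (i',j) = y (i',j)"
  shows "greedy Q a n x i = greedy Q a n y i"
  using assms
proof (induction i)
  case (Suc i)
  have IH: "greedy Q a n x i = greedy Q a n y i" using Suc by auto
  have xy: "\<And>j. j \<in> greedy_cand a n i \<Longrightarrow> x (i,j) = y (i,j)" using Suc.prems by auto
  obtain U M where UM: "greedy Q a n y i = (U, M)" by (cases "greedy Q a n y i")
  have "(\<exists>j\<in>greedy_cand a n i - U. x (i,j)) = (\<exists>j\<in>greedy_cand a n i - U. y (i,j))"
    using xy by auto
  moreover have "(LEAST j. j \<in> greedy_cand a n i \<and> j \<notin> U \<and> x (i,j))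
      = (LEAST j. j \<in> greedy_cand a n i \<and> j \<notin> U \<and> y (i,j))"
    using xy by (intro arg_cong[where f=Least] ext) auto
  ultimately show ?case by (simp add: IH UM Let_def)
qed simp

locale greedy_setting =
  fixes Q :: "(nat \<times> nat) set" and a n :: nat and x :: "nat \<times> nat \<Rightarrow> bool"
  assumes finite_Q: "finite Q" and inj_fst_Q: "inj_on fst Q" and inj_snd_Q: "inj_on snd Q"
    and Q_subset: "Q \<subseteq> {..<a} \<times> {..<a}" and a_le_n: "a \<le> n"
begin

abbreviation "used i \<equiv> fst (greedy Q a n x i)"
abbreviation "chosen i \<equiv> snd (greedy Q a n x i)"

definition failed :: "nat \<Rightarrow> nat set" where
  "failed b = {k. k < b \<and> k \<notin> fst ` Q \<and> \<not> greedy_step Q a n x k}"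

definition stuck :: "nat \<Rightarrow> nat set" where
  "stuck s = {k. k < n \<and> s < card (greedy_free Q a n x k) \<and> (\<forall>j\<in>greedy_free Q a n x k. \<not> x (k,j))}"

lemma greedy_Suc_step:
  assumes "greedy_step Q a n x i"
  shows "used (Suc i) = insert (LEAST j. j \<in> greedy_cand a n i - used i \<and> x (i,j)) (used i)"
    "chosen (Suc i) = insert (i, LEAST j. j \<in> greedy_cand a n i - used i \<and> x (i,j)) (chosen i)"
  using assms unfolding greedy_step_def by (auto simp: Let_def split: prod.splits)

lemma greedy_Suc_no_step:
  assumes "\<not> greedy_step Q a n x i"
  shows "used (Suc i) = used i" "chosen (Suc i) = chosen i"
  using assms unfolding greedy_step_def by (auto simp: Let_def split: prod.splits)

lemma greedy_invariant:
  "finite (chosen i) \<and> used i = snd ` chosen i \<and> inj_on fst (chosen i) \<and> inj_on snd (chosen i) \<and>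
   Q \<subseteq> chosen i \<and> (\<forall>e\<in>chosen i - Q. fst e < i \<and> x e \<and> snd e \<in> greedy_cand a n (fst e)) \<and>
   card (chosen i) = card Q + card {k. k < i \<and> greedy_step Q a n x k}"
proof (induction i)
  case 0
  thus ?case using finite_Q inj_fst_Q inj_snd_Q by simp
next
  case (Suc i)
  show ?case
  proof (cases "greedy_step Q a n x i")
    case False
    have "{k. k < Suc i \<and> greedy_step Q a n x k} = {k. k < i \<and> greedy_step Q a n x k}"
      using False less_Suc_eq by auto
    thus ?thesis using Suc greedy_Suc_no_step[OF False] by (auto simp: less_Suc_eq)
  next
    case True
    define j where "j = (LEAST j. j \<in> greedy_cand a n i - used i \<and> x (i,j))"
    have "\<exists>j. j \<in> greedy_cand a n i - used i \<and> x (i,j)"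
      using True unfolding greedy_step_def by auto
    hence j: "j \<in> greedy_cand a n i - used i \<and> x (i,j)" unfolding j_def by (rule LeastI_ex)
    have i_Q: "i \<notin> fst ` Q" using True unfolding greedy_step_def by auto
    have i_new: "i \<notin> fst ` chosen i"
    proof
      assume "i \<in> fst ` chosen i"
      then obtain e where e: "e \<in> chosen i" "fst e = i" by auto
      show False
      proof (cases "e \<in> Q")
        case True thus False using e i_Q by force
      next
        case False thus False using e Suc.IH by auto
      qed
    qed
    have j_new: "j \<notin> snd ` chosen i" using j Suc.IH by auto
    have used_Suc: "used (Suc i) = insert j (used i)"
      and chosen_Suc: "chosen (Suc i) = insert (i,j) (chosen i)"
      using greedy_Suc_step[OF True] by (simp_all add: j_def)
    have steps: "{k. k < Suc i \<and> greedy_step Q a n x k} = insert i {k. k < i \<and> greedy_step Q a n x k}"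
      using True less_Suc_eq by auto
    have "(i,j) \<notin> chosen i" using i_new by force
    hence "card (insert (i,j) (chosen i)) = Suc (card (chosen i))" using Suc.IH by simp
    thus ?thesis
      unfolding used_Suc chosen_Suc using Suc.IH i_new j_new j steps
      by (auto simp: less_Suc_eq inj_on_def)
  qed
qed

lemma used_mono: "i \<le> i' \<Longrightarrow> used i \<subseteq> used i'"
proof (induction i' rule: dec_induct)
  case (step k)
  thus ?case using greedy_Suc_step(1)[of k] greedy_Suc_no_step(1)[of k] by (cases "greedy_step Q a n x k") auto
qed simp

lemma used_subset: "used i \<subseteq> {..<n}"
proof
  fix j assume "j \<in> used i"
  then obtain e where e: "e \<in> chosen i" "snd e = j" using greedy_invariant[of i] by auto
  show "j \<in> {..<n}"
  proof (cases "e \<in> Q")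
    case True thus ?thesis using Q_subset a_le_n e by force
  next
    case False thus ?thesis using greedy_invariant[of i] e by (auto simp: greedy_cand_def split: if_splits)
  qed
qed

lemma card_used: "card (used i) = card (chosen i)"
  using greedy_invariant[of i] by (simp add: card_image)

lemma card_failed:
  assumes "a \<le> b"
  shows "card (failed b) + card (chosen b) = b"
proof -
  define S where "S = {k. k < b \<and> greedy_step Q a n x k}"
  have "fst ` Q \<subseteq> {..<b}" using Q_subset assms by force
  hence "{..<b} = (S \<union> failed b) \<union> fst ` Q"
    by (auto simp: S_def failed_def greedy_step_def)
  hence "b = card ((S \<union> failed b) \<union> fst ` Q)"
    by (metis card_lessThan)
  also have "\<dots> = card (S \<union> failed b) + card (fst ` Q)"
    by (rule card_Un_disjoint) (auto simp: S_def failed_def greedy_step_def finite_Q)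
  also have "card (S \<union> failed b) = card S + card (failed b)"
    by (rule card_Un_disjoint) (auto simp: S_def failed_def)
  also have "card (fst ` Q) = card Q"
    using inj_fst_Q by (simp add: card_image)
  finally show ?thesis
    using greedy_invariant[of b] by (simp add: S_def)
qed

lemma card_Q_plus_used_high_le: "card Q + card (used b \<inter> {a..<n}) \<le> card (chosen b)"
proof -
  have "snd ` Q \<union> (used b \<inter> {a..<n}) \<subseteq> used b"
    using greedy_invariant[of b] by auto
  hence "card (snd ` Q \<union> (used b \<inter> {a..<n})) \<le> card (used b)"
    by (intro card_mono) (use greedy_invariant[of b] in auto)
  moreover have "card (snd ` Q \<union> (used b \<inter> {a..<n})) = card (snd ` Q) + card (used b \<inter> {a..<n})"
    by (rule card_Un_disjoint) (use Q_subset finite_Q in auto)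
  moreover have "card (snd ` Q) = card Q"
    using inj_snd_Q by (simp add: card_image)
  ultimately show ?thesis using card_used[of b] by simp
qed

lemma failed_in_stuck:
  assumes "k \<in> failed b" "b \<le> n" "R \<subseteq> greedy_cand a n k - used k" "s < card R"
  shows "k \<in> stuck s"
proof -
  have "card R \<le> card (greedy_cand a n k - used k)"
    using assms(3) by (intro card_mono) (auto simp: greedy_cand_def)
  thus ?thesis
    using assms by (auto simp: failed_def stuck_def greedy_free_def greedy_step_def)
qed

lemma failed_high_in_stuck:
  assumes "k \<in> failed n" "a \<le> k" "card (used n) + s < n"
  shows "k \<in> stuck s"
proof (rule failed_in_stuck[OF assms(1) order_refl])
  show "{..<n} - used n \<subseteq> greedy_cand a n k - used k"
    using used_mono[of k n] assms unfolding greedy_cand_def failed_def by auto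
  show "s < card ({..<n} - used n)"
    using used_subset[of n] assms(3) by (simp add: card_Diff_subset finite_subset)
qed

lemma failed_low_in_stuck:
  assumes "k \<in> failed n" "k < a" "card (used a \<inter> {a..<n}) + s < n - a"
  shows "k \<in> stuck s"
proof (rule failed_in_stuck[OF assms(1) order_refl])
  show "{a..<n} - used a \<subseteq> greedy_cand a n k - used k"
    using used_mono[of k a] assms(2) unfolding greedy_cand_def by auto
  have "{a..<n} - used a = {a..<n} - (used a \<inter> {a..<n})" by auto
  thus "s < card ({a..<n} - used a)"
    using assms(3) by (simp add: card_Diff_subset)
qed

lemma greedy_deficiency:
  "int n - int (card (chosen n)) \<le> int s + max 0 (2 * int a - int n - int (card Q)) + int (card (stuck s))"
proof -
  have fin: "finite (stuck s)" unfolding stuck_def by auto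
  have deficit: "int n - int (card (chosen n)) = int (card (failed n))"
    using card_failed[OF a_le_n] by simp
  show ?thesis
  proof (cases "n \<le> card (used n) + s")
    case True
    thus ?thesis using deficit card_used[of n] by simp
  next
    case many_free: False
    show ?thesis
    proof (cases "card (used a \<inter> {a..<n}) + s < n - a")
      case True
      have "failed n \<subseteq> stuck s"
      proof
        fix k assume "k \<in> failed n"
        thus "k \<in> stuck s"
          using failed_high_in_stuck[of k s] failed_low_in_stuck[of k s] True many_free
          by (cases "k < a") auto
      qed
      hence "card (failed n) \<le> card (stuck s)" using fin by (rule card_mono[rotated])
      thus ?thesis using deficit by simp
    next
      case False
      \<comment> \<open>few hubs are left after the low phase, so few low vertices failed\<close>
      have "failed n \<subseteq> failed a \<union> stuck s"
        using failed_high_in_stuck many_free by (force simp: failed_def)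
      moreover have "finite (failed a \<union> stuck s)" using fin by (simp add: failed_def)
      ultimately have "card (failed n) \<le> card (failed a \<union> stuck s)"
        by (rule card_mono[rotated])
      hence "card (failed n) \<le> card (failed a) + card (stuck s)"
        using card_Un_le[of "failed a" "stuck s"] by linarith
      moreover have "card (failed a) + card Q + card (used a \<inter> {a..<n}) \<le> a"
        using card_failed[of a] card_Q_plus_used_high_le[of a] by simp
      ultimately show ?thesis using deficit False a_le_n by linarith
    qed
  qed
qed

end

section \<open>The construction\<close>

lemma div_eq_iff_bounds: "(0::nat) < t \<Longrightarrow> j div t = g \<longleftrightarrow> g * t \<le> j \<and> j < g * t + t"
  by (metis add.commute div_nat_eqI div_times_less_eq_dividend mod_less_divisor
      div_mult_mod_eq add_less_cancel_left mult.commute mult_Suc)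

locale construction =
  fixes p :: real
  assumes p_pos: "0 < p" and p_less_1: "p < 1"
begin

definition t :: nat where "t = nat \<lceil>(3/25) / p\<rceil>"
definition hubs :: "nat \<Rightarrow> nat" where "hubs n = nat \<lfloor>(12/25) * real n\<rfloor>"
definition core :: "nat \<Rightarrow> nat" where "core n = n - hubs n"
definition nblocks :: "nat \<Rightarrow> nat" where "nblocks n = nat \<lfloor>(57/1000) * real n / (real t ^ 2 * p)\<rfloor>"
definition block_range :: "nat \<Rightarrow> nat set" where "block_range g = {g * t..<g * t + t}"
definition blocks :: "nat \<Rightarrow> (nat \<times> nat) set" where
  "blocks n = (\<Union>g<nblocks n. block_range g \<times> block_range g)"
definition graph :: "nat \<Rightarrow> (nat \<times> nat) set" where
  "graph n = blocks n \<union> {(i,j). i < n \<and> j < n \<and> (core n \<le> i \<or> core n \<le> j)}"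
definition block :: "nat \<times> nat \<Rightarrow> nat" where "block e = fst e div t"

lemma t_bounds: "1 \<le> t" "3/25 \<le> real t * p" "(real t - 1) * p < 3/25"
proof -
  have pos: "0 < (3/25) / p" using p_pos by simp
  have t: "real t = real_of_int \<lceil>(3/25) / p\<rceil>" unfolding t_def using pos by simp
  show "1 \<le> t" unfolding t_def using pos by linarith
  have "(3/25) / p \<le> real t" unfolding t by simp
  thus "3/25 \<le> real t * p" using p_pos by (simp add: field_simps)
  have "real t < (3/25) / p + 1" unfolding t by linarith
  thus "(real t - 1) * p < 3/25" using p_pos by (simp add: field_simps)
qed

lemma t_pos: "0 < t" using t_bounds by simp

lemma hubs_bounds: "real (hubs n) \<le> (12/25) * real n" "(12/25) * real n - 1 < real (hubs n)"
  unfolding hubs_def by linarith+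

lemma core_le: "core n \<le> n" unfolding core_def by simp

lemma nblocks_bounds:
  "real (nblocks n) * (real t ^ 2 * p) \<le> (57/1000) * real n"
  "(57/1000) * real n - real t ^ 2 * p < real (nblocks n) * (real t ^ 2 * p)"
proof -
  have tp: "0 < real t ^ 2 * p" using t_pos p_pos by simp
  hence N: "real (nblocks n) = real_of_int \<lfloor>(57/1000) * real n / (real t ^ 2 * p)\<rfloor>"
    unfolding nblocks_def by simp
  have "real (nblocks n) \<le> (57/1000) * real n / (real t ^ 2 * p)" unfolding N by linarith
  thus "real (nblocks n) * (real t ^ 2 * p) \<le> (57/1000) * real n" using tp by (simp add: field_simps)
  have "(57/1000) * real n / (real t ^ 2 * p) - 1 < real (nblocks n)" unfolding N by linarith
  thus "(57/1000) * real n - real t ^ 2 * p < real (nblocks n) * (real t ^ 2 * p)"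
    using tp by (simp add: field_simps)
qed

lemma nblocks_mult_t_le_core: "nblocks n * t \<le> core n"
proof -
  have "real (nblocks n) * real t * (real t * p) \<le> (57/1000) * real n"
    using nblocks_bounds(1)[of n] by (simp add: power2_eq_square mult_ac)
  moreover have "real (nblocks n) * real t * (3/25) \<le> real (nblocks n) * real t * (real t * p)"
    using t_bounds by (intro mult_left_mono) auto
  moreover have "(13/25) * real n \<le> real (core n)"
    using hubs_bounds(1)[of n] by (simp add: core_def of_nat_diff)
  ultimately have "real (nblocks n * t) \<le> real (core n)" by simp
  thus ?thesis by linarith
qed

lemma mem_block_range: "j \<in> block_range g \<longleftrightarrow> j div t = g"
  unfolding block_range_def using div_eq_iff_bounds[OF t_pos] by simp

lemma mem_blocks: "e \<in> blocks n \<longleftrightarrow> block e < nblocks n \<and> snd e div t = block e"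
  unfolding blocks_def block_def by (cases e) (auto simp: mem_block_range)

lemma blocks_subset: "blocks n \<subseteq> {..<core n} \<times> {..<core n}"
proof
  fix e assume "e \<in> blocks n"
  then obtain g where "g < nblocks n" "e \<in> block_range g \<times> block_range g"
    unfolding blocks_def by blast
  moreover have "g * t + t \<le> core n"
    using \<open>g < nblocks n\<close> nblocks_mult_t_le_core[of n] mult_le_mono1[of "Suc g" "nblocks n" t] by simp
  ultimately show "e \<in> {..<core n} \<times> {..<core n}"
    by (auto simp: block_range_def)
qed

lemma graph_subset: "graph n \<subseteq> {..<n} \<times> {..<n}"
  using blocks_subset[of n] core_le[of n] unfolding graph_def by fastforce

lemma finite_graph: "finite (graph n)"
  using graph_subset by (rule finite_subset) auto

lemma blocks_subset_graph: "blocks n \<subseteq> graph n"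
  unfolding graph_def by auto

lemma finite_blocks: "finite (blocks n)"
  using blocks_subset_graph finite_graph by (rule finite_subset)

lemma card_blocks: "card (blocks n) = nblocks n * t * t"
proof -
  have "disjoint_family_on (\<lambda>g. block_range g \<times> block_range g) {..<nblocks n}"
    by (auto simp: disjoint_family_on_def mem_block_range)
  hence "card (blocks n) = (\<Sum>g<nblocks n. card (block_range g \<times> block_range g))"
    unfolding blocks_def by (intro card_UN_disjoint') (auto simp: block_range_def)
  thus ?thesis by (simp add: block_range_def card_cartesian_product)
qed

lemma card_blocks_le: "card (blocks n) \<le> n * t"
  using nblocks_mult_t_le_core[of n] core_le[of n] by (simp add: card_blocks le_trans)

lemma same_block_subset: "{f\<in>blocks n. block f = g} \<subseteq> block_range g \<times> block_range g"
  by (auto simp: mem_blocks mem_block_range block_def)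

lemma card_same_block: "card {f\<in>blocks n. block f = g} \<le> t * t"
  using card_mono[OF _ same_block_subset] by (simp add: block_range_def card_cartesian_product)

lemma block_adjacent_edges:
  "e \<in> blocks n \<Longrightarrow> f \<in> adjacent_edges (blocks n) e \<Longrightarrow> block f = block e"
  unfolding adjacent_edges_def by (auto simp: mem_blocks block_def)

lemma card_adjacent_edges:
  assumes "e \<in> blocks n"
  shows "card (adjacent_edges (blocks n) e) \<le> 2 * (t - 1)"
proof -
  define S where "S = block_range (block e)"
  have eS: "fst e \<in> S" "snd e \<in> S"
    using assms by (auto simp: S_def mem_blocks mem_block_range block_def)
  have "adjacent_edges (blocks n) e \<subseteq> ({fst e} \<times> (S - {snd e})) \<union> ((S - {fst e}) \<times> {snd e})"
  proof
    fix f assume f: "f \<in> adjacent_edges (blocks n) e"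
    hence "fst f \<in> S" "snd f \<in> S"
      using same_block_subset[of n "block e"] block_adjacent_edges[OF assms f]
      unfolding adjacent_edges_def S_def by auto
    thus "f \<in> ({fst e} \<times> (S - {snd e})) \<union> ((S - {fst e}) \<times> {snd e})"
      using f unfolding adjacent_edges_def by (cases f; cases e) auto
  qed
  hence "card (adjacent_edges (blocks n) e)
      \<le> card (({fst e} \<times> (S - {snd e})) \<union> ((S - {fst e}) \<times> {snd e}))"
    by (intro card_mono) (auto simp: S_def block_range_def)
  also have "\<dots> \<le> card ({fst e} \<times> (S - {snd e})) + card ((S - {fst e}) \<times> {snd e})"
    by (rule card_Un_le)
  also have "\<dots> = 2 * (t - 1)"
    using eS by (simp add: S_def block_range_def card_cartesian_product)
  finally show ?thesis .
qed


section \<open>Isolated block edges\<close>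

abbreviation sample :: "nat \<Rightarrow> (nat \<times> nat \<Rightarrow> bool) pmf" where
  "sample n \<equiv> Pi_pmf (graph n) False (\<lambda>_. bernoulli_pmf p)"

lemma finite_set_pmf_sample: "finite (set_pmf (sample n))"
  by (rule finite_set_pmf_Pi_bernoulli[OF finite_graph])

lemma integrable_sample: "integrable (measure_pmf (sample n)) (f :: _ \<Rightarrow> real)"
  by (rule integrable_measure_pmf_finite[OF finite_set_pmf_sample])

definition isolated_event :: "nat \<Rightarrow> nat \<times> nat \<Rightarrow> (nat \<times> nat \<Rightarrow> bool) set" where
  "isolated_event n e = {x. x e \<and> (\<forall>f\<in>adjacent_edges (blocks n) e. \<not> x f)}"

definition n_isolated :: "nat \<Rightarrow> (nat \<times> nat \<Rightarrow> bool) \<Rightarrow> real" where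
  "n_isolated n x = real (card (isolated_edges (blocks n) x))"

definition mean_isolated :: "nat \<Rightarrow> real" where
  "mean_isolated n = (\<Sum>e\<in>blocks n. measure_pmf.prob (sample n) (isolated_event n e))"

lemma prob_isolated_event:
  assumes "e \<in> blocks n"
  shows "measure_pmf.prob (sample n) (isolated_event n e) = p * (1 - p) ^ card (adjacent_edges (blocks n) e)"
proof -
  have "isolated_event n e = {x. (\<forall>g\<in>{e}. x g) \<and> (\<forall>g\<in>adjacent_edges (blocks n) e. \<not> x g)}"
    by (auto simp: isolated_event_def)
  also have "measure_pmf.prob (sample n) \<dots> = p ^ card {e} * (1 - p) ^ card (adjacent_edges (blocks n) e)"
    using assms blocks_subset_graph[of n] adjacent_edges_subset[of "blocks n" e]
      not_in_adjacent_edges[of e "blocks n"] p_pos p_less_1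
    by (intro prob_Pi_bernoulli_cylinder finite_graph) auto
  finally show ?thesis by simp
qed

text \<open>Isolation events of edges in different blocks concern disjoint sets of coordinates.\<close>
lemma prob_isolated_events_indep:
  assumes e: "e \<in> blocks n" and f: "f \<in> blocks n" and blocks_ne: "block e \<noteq> block f"
  shows "measure_pmf.prob (sample n) (isolated_event n e \<inter> isolated_event n f) =
         measure_pmf.prob (sample n) (isolated_event n e) * measure_pmf.prob (sample n) (isolated_event n f)"
proof -
  let ?Ae = "adjacent_edges (blocks n) e" and ?Af = "adjacent_edges (blocks n) f"
  have "?Ae \<inter> ?Af = {}" "e \<notin> ?Af" "f \<notin> ?Ae"
    using block_adjacent_edges[OF e] block_adjacent_edges[OF f] blocks_ne by (metis disjoint_iff)+
  hence disj: "?Ae \<inter> ?Af = {}" "{e, f} \<inter> (?Ae \<union> ?Af) = {}"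
    using not_in_adjacent_edges[of e "blocks n"] not_in_adjacent_edges[of f "blocks n"] by auto
  have ef: "e \<noteq> f" using blocks_ne by auto
  have fin: "finite ?Ae" "finite ?Af"
    by (rule finite_subset[OF adjacent_edges_subset finite_blocks])+
  have "isolated_event n e \<inter> isolated_event n f = {x. (\<forall>g\<in>{e,f}. x g) \<and> (\<forall>g\<in>?Ae \<union> ?Af. \<not> x g)}"
    by (auto simp: isolated_event_def)
  also have "measure_pmf.prob (sample n) \<dots> = p ^ card {e,f} * (1 - p) ^ card (?Ae \<union> ?Af)"
    using e f blocks_subset_graph[of n] adjacent_edges_subset[of "blocks n" e]
      adjacent_edges_subset[of "blocks n" f] p_pos p_less_1 disj(2)
    by (intro prob_Pi_bernoulli_cylinder finite_graph) auto
  also have "\<dots> = (p * (1 - p) ^ card ?Ae) * (p * (1 - p) ^ card ?Af)"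
    using ef disj(1) fin by (simp add: card_Un_disjoint power_add power2_eq_square mult_ac)
  finally show ?thesis using prob_isolated_event e f by simp
qed

lemma n_isolated_eq_sum: "n_isolated n x = (\<Sum>e\<in>blocks n. indicator (isolated_event n e) x)"
proof -
  have "isolated_edges (blocks n) x = {e\<in>blocks n. x \<in> isolated_event n e}"
    unfolding isolated_edges_def isolated_event_def by auto
  thus ?thesis unfolding n_isolated_def using finite_blocks
    by (simp add: indicator_def sum.If_cases Int_def)
qed

lemma variance_n_isolated_le:
  "measure_pmf.expectation (sample n) (\<lambda>x. (n_isolated n x - mean_isolated n)\<^sup>2) \<le> real (card (blocks n) * t * t)"
proof -
  let ?P = "measure_pmf.prob (sample n)"
  have "measure_pmf.expectation (sample n) (\<lambda>x. (n_isolated n x - mean_isolated n)\<^sup>2)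
      = (\<Sum>e\<in>blocks n. \<Sum>f\<in>blocks n. ?P (isolated_event n e \<inter> isolated_event n f)
           - ?P (isolated_event n e) * ?P (isolated_event n f))"
    unfolding n_isolated_eq_sum mean_isolated_def
    by (rule expectation_sum_indicators_sq_dev[OF finite_blocks finite_set_pmf_sample])
  also have "\<dots> \<le> (\<Sum>e\<in>blocks n. \<Sum>f\<in>blocks n. (if block f = block e then 1 else 0))"
  proof (intro sum_mono)
    fix e f assume e: "e \<in> blocks n" and f: "f \<in> blocks n"
    have "?P (isolated_event n e \<inter> isolated_event n f) \<le> 1" by (rule measure_pmf.prob_le_1)
    moreover have "0 \<le> ?P (isolated_event n e) * ?P (isolated_event n f)" by simp
    ultimately have "?P (isolated_event n e \<inter> isolated_event n f) - ?P (isolated_event n e) * ?P (isolated_event n f) \<le> 1"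
      by linarith
    thus "?P (isolated_event n e \<inter> isolated_event n f) - ?P (isolated_event n e) * ?P (isolated_event n f)
        \<le> (if block f = block e then 1 else 0)"
      using prob_isolated_events_indep[OF e f] by auto
  qed
  also have "\<dots> = (\<Sum>e\<in>blocks n. real (card {f\<in>blocks n. block f = block e}))"
    using finite_blocks by (simp add: sum.If_cases Int_def)
  also have "\<dots> \<le> (\<Sum>e\<in>blocks n. real (t * t))"
    using card_same_block by (intro sum_mono) (simp only: of_nat_le_iff)
  also have "\<dots> = real (card (blocks n) * t * t)" by simp
  finally show ?thesis .
qed

lemma mean_isolated_ge: "(19/25) * ((57/1000) * real n - real t ^ 2 * p) \<le> mean_isolated n"
proof -
  have "real (2 * (t - 1)) * (- p) = - 2 * ((real t - 1) * p)"
    using t_bounds(1) by (simp add: of_nat_diff)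
  hence "19/25 \<le> 1 + real (2 * (t - 1)) * (- p)"
    using t_bounds(3) by linarith
  also have "\<dots> \<le> (1 - p) ^ (2 * (t - 1))"
    using Bernoulli_inequality[of "- p" "2 * (t - 1)"] p_less_1 by simp
  finally have isolated_lb: "19/25 \<le> (1 - p) ^ (2 * (t - 1))" .
  have "real (card (blocks n)) * p * (1 - p) ^ (2 * (t - 1)) = (\<Sum>e\<in>blocks n. p * (1 - p) ^ (2 * (t - 1)))"
    by simp
  also have "\<dots> \<le> (\<Sum>e\<in>blocks n. p * (1 - p) ^ card (adjacent_edges (blocks n) e))"
    using p_pos p_less_1 card_adjacent_edges
    by (intro sum_mono mult_left_mono power_decreasing) auto
  also have "\<dots> = mean_isolated n"
    unfolding mean_isolated_def by (intro sum.cong refl prob_isolated_event[symmetric])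
  finally have "real (card (blocks n)) * p * (19/25) \<le> mean_isolated n"
    using isolated_lb p_pos order_trans mult_left_mono by (smt (verit) mult_nonneg_nonneg of_nat_0_le_iff)
  moreover have "real (card (blocks n)) * p = real (nblocks n) * (real t ^ 2 * p)"
    by (simp add: card_blocks power2_eq_square mult_ac)
  ultimately show ?thesis
    using nblocks_bounds(2)[of n] by simp
qed

lemma core_excess_le: "real (2 * core n) - real n \<le> (1/25) * real n + 2"
  using hubs_bounds(2)[of n] by (simp add: core_def of_nat_diff)

lemma expectation_shortfall_bound:
  assumes n: "(19/25) * real t ^ 2 * p + 2 \<le> real n * (8/25000)" and n_pos: "0 < n"
  shows "measure_pmf.expectation (sample n) (\<lambda>x. max 0 (real (2 * core n) - real n - n_isolated n x))
           \<le> 1000 * real t ^ 3 / 3"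
proof -
  have gap: "(3/1000) * real n \<le> mean_isolated n - (real (2 * core n) - real n)"
    using mean_isolated_ge[of n] core_excess_le[of n] n by (simp add: algebra_simps)
  have pos: "0 < (3/1000) * real n" using n_pos by simp
  have "measure_pmf.expectation (sample n) (\<lambda>x. max 0 (real (2 * core n) - real n - n_isolated n x))
        \<le> real (card (blocks n) * t * t) / (mean_isolated n - (real (2 * core n) - real n))"
    using gap pos variance_n_isolated_le[of n]
    by (intro order_trans[OF expectation_shortfall_le[OF finite_set_pmf_sample,
          where Z = "n_isolated n" and w = "real (2 * core n) - real n" and m = "mean_isolated n"]]
        divide_right_mono) auto
  also have "\<dots> \<le> real (n * t * t * t) / ((3/1000) * real n)"
  proof (intro frac_le)
    show "real (card (blocks n) * t * t) \<le> real (n * t * t * t)"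
      using card_blocks_le[of n] by (simp only: of_nat_le_iff mult_le_mono1)
  qed (use gap pos in auto)
  also have "\<dots> = 1000 * real t ^ 3 / 3" using n_pos by (simp add: power3_eq_cube field_simps)
  finally show ?thesis .
qed

section \<open>The expected matching number\<close>

lemma greedy_setting_isolated: "greedy_setting (isolated_edges (blocks n) x) (core n) n"
proof
  show "finite (isolated_edges (blocks n) x)"
    using finite_blocks by (rule finite_subset[rotated]) (auto simp: isolated_edges_def)
  show "inj_on fst (isolated_edges (blocks n) x)" "inj_on snd (isolated_edges (blocks n) x)"
    by (rule inj_on_isolated_edges)+
  show "isolated_edges (blocks n) x \<subseteq> {..<core n} \<times> {..<core n}"
    using blocks_subset[of n] by (auto simp: isolated_edges_def)
  show "core n \<le> n" by (rule core_le)
qed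

definition greedy_matching :: "nat \<Rightarrow> (nat \<times> nat \<Rightarrow> bool) \<Rightarrow> (nat \<times> nat) set" where
  "greedy_matching n x = snd (greedy (isolated_edges (blocks n) x) (core n) n x n)"

definition stuck_event :: "nat \<Rightarrow> nat \<Rightarrow> nat \<Rightarrow> (nat \<times> nat \<Rightarrow> bool) set" where
  "stuck_event n s k = {x. s < card (greedy_free (isolated_edges (blocks n) x) (core n) n x k) \<and>
     (\<forall>j\<in>greedy_free (isolated_edges (blocks n) x) (core n) n x k. \<not> x (k,j))}"

lemma greedy_matching_props:
  "greedy_matching n x \<subseteq> {e\<in>graph n. x e}" "is_matching (greedy_matching n x)"
proof -
  interpret G: greedy_setting "isolated_edges (blocks n) x" "core n" n x
    by (rule greedy_setting_isolated)
  have I: "finite (G.chosen n)" "inj_on fst (G.chosen n)" "inj_on snd (G.chosen n)"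
     "\<forall>e\<in>G.chosen n - isolated_edges (blocks n) x. fst e < n \<and> x e \<and> snd e \<in> greedy_cand (core n) n (fst e)"
    using G.greedy_invariant[of n] by auto
  show "is_matching (greedy_matching n x)"
    using I unfolding greedy_matching_def by (intro is_matching_if_inj) auto
  show "greedy_matching n x \<subseteq> {e\<in>graph n. x e}"
  proof
    fix e assume e: "e \<in> greedy_matching n x"
    show "e \<in> {e\<in>graph n. x e}"
    proof (cases "e \<in> isolated_edges (blocks n) x")
      case True thus ?thesis using blocks_subset_graph[of n] by (auto simp: isolated_edges_def)
    next
      case False
      hence "fst e < n \<and> x e \<and> snd e \<in> greedy_cand (core n) n (fst e)"
        using I e unfolding greedy_matching_def by auto
      thus ?thesis unfolding graph_def greedy_cand_def by (cases e) (auto split: if_splits)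
    qed
  qed
qed

lemma mu_ge_greedy:
  "real n - real s - max 0 (real (2 * core n) - real n - n_isolated n x)
      - (\<Sum>k<n. indicator (stuck_event n s k) x) \<le> real (mu {e\<in>graph n. x e})"
proof -
  interpret G: greedy_setting "isolated_edges (blocks n) x" "core n" n x
    by (rule greedy_setting_isolated)
  have "card (greedy_matching n x) \<le> mu {e\<in>graph n. x e}"
    using greedy_matching_props finite_graph by (intro card_le_mu) auto
  moreover have "G.stuck s = {k. k < n \<and> x \<in> stuck_event n s k}"
    unfolding G.stuck_def stuck_event_def by simp
  hence "real (card (G.stuck s)) = (\<Sum>k<n. indicator (stuck_event n s k) x)"
    by (simp add: indicator_def sum.If_cases Int_def lessThan_def)
  moreover have "real_of_int (int n - int (card (greedy_matching n x)))
      \<le> real_of_int (int s + max 0 (2 * int (core n) - int n - int (card (isolated_edges (blocks n) x)))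
           + int (card (G.stuck s)))"
    using G.greedy_deficiency[of s] unfolding greedy_matching_def of_int_le_iff .
  ultimately show ?thesis
    unfolding n_isolated_def of_int_add of_int_diff of_int_max by simp
qed

text \<open>Whether \<open>k\<close> is stuck depends on the edges at \<open>k\<close> only through the current state of the
  greedy algorithm, which is determined by the edges outside row \<open>k\<close>.\<close>
lemma greedy_free_local:
  assumes k: "k < n" and xy: "\<And>e. e \<in> graph n - Pair k ` greedy_cand (core n) n k \<Longrightarrow> x e = y e"
  shows "greedy_free (isolated_edges (blocks n) x) (core n) n x k
       = greedy_free (isolated_edges (blocks n) y) (core n) n y k"
proof -
  have "x e = y e" if e: "e \<in> blocks n" for e
  proof (rule xy)
    have "e \<notin> Pair k ` greedy_cand (core n) n k"
      using e blocks_subset[of n] unfolding greedy_cand_def by (auto split: if_splits)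
    thus "e \<in> graph n - Pair k ` greedy_cand (core n) n k" using e blocks_subset_graph by auto
  qed
  hence "isolated_edges (blocks n) x = isolated_edges (blocks n) y"
    unfolding isolated_edges_def adjacent_edges_def by auto
  moreover have "greedy (isolated_edges (blocks n) y) (core n) n x k = greedy (isolated_edges (blocks n) y) (core n) n y k"
  proof (rule greedy_cong)
    fix i j assume "i < k" "j \<in> greedy_cand (core n) n i"
    moreover from this have "(i, j) \<in> graph n"
      using k unfolding graph_def greedy_cand_def by (auto split: if_splits)
    ultimately show "x (i, j) = y (i, j)" by (intro xy) auto
  qed
  ultimately show ?thesis unfolding greedy_free_def by simp
qed

lemma prob_stuck_event:
  assumes k: "k < n"
  shows "measure_pmf.prob (sample n) (stuck_event n s k) \<le> (1 - p) ^ Suc s"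
proof -
  define D where "D = Pair k ` greedy_cand (core n) n k"
  define A where "A = (\<lambda>x. Pair k ` greedy_free (isolated_edges (blocks n) x) (core n) n x k)"
  have "card (A x) = card (greedy_free (isolated_edges (blocks n) x) (core n) n x k)" for x
    unfolding A_def by (rule card_image) (simp add: inj_on_def)
  hence "stuck_event n s k = {x. s < card (A x) \<and> (\<forall>e\<in>A x. \<not> x e)}"
    unfolding stuck_event_def A_def by auto
  moreover have "measure_pmf.prob (sample n) {x. s < card (A x) \<and> (\<forall>e\<in>A x. \<not> x e)} \<le> (1 - p) ^ Suc s"
  proof (rule prob_Pi_bernoulli_absent_set[OF finite_graph])
    show "D \<subseteq> graph n" using k unfolding D_def graph_def greedy_cand_def by auto
    show "0 \<le> p" "p \<le> 1" using p_pos p_less_1 by auto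
    show "A x \<subseteq> D" for x unfolding A_def D_def greedy_free_def by auto
    show "A x = A y" if "\<And>e. e \<in> graph n - D \<Longrightarrow> x e = y e" for x y
      unfolding A_def using greedy_free_local[OF k, of x y] that by (simp add: D_def)
  qed
  ultimately show ?thesis by simp
qed

lemma expected_mu_ge:
  "real n - real s - measure_pmf.expectation (sample n) (\<lambda>x. max 0 (real (2 * core n) - real n - n_isolated n x))
     - real n * (1 - p) ^ Suc s \<le> expected_mu p (graph n)"
proof -
  let ?E = "measure_pmf.expectation (sample n)"
  let ?w = "real (2 * core n) - real n"
  have "?E (\<lambda>x. real n - real s - max 0 (?w - n_isolated n x) - (\<Sum>k<n. indicator (stuck_event n s k) x))
        \<le> expected_mu p (graph n)"
    unfolding expected_mu_def realization_def by (intro integral_mono integrable_sample mu_ge_greedy)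
  moreover have "?E (\<lambda>x. real n - real s - max 0 (?w - n_isolated n x) - (\<Sum>k<n. indicator (stuck_event n s k) x))
      = real n - real s - ?E (\<lambda>x. max 0 (?w - n_isolated n x))
          - (\<Sum>k<n. measure_pmf.prob (sample n) (stuck_event n s k))"
    by (simp add: integrable_sample Bochner_Integration.integral_sum)
  moreover have "(\<Sum>k<n. measure_pmf.prob (sample n) (stuck_event n s k)) \<le> real n * (1 - p) ^ Suc s"
    using sum_mono[of "{..<n}" "\<lambda>k. measure_pmf.prob (sample n) (stuck_event n s k)" "\<lambda>_. (1 - p) ^ Suc s"]
      prob_stuck_event by simp
  ultimately show ?thesis by linarith
qed

lemma expected_mu_le: "expected_mu p (graph n) \<le> real n"
proof -
  have "mu {e\<in>graph n. x e} \<le> n" for x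
    using finite_graph graph_subset[of n] by (intro mu_le) auto
  hence "expected_mu p (graph n) \<le> measure_pmf.expectation (sample n) (\<lambda>x. real n)"
    unfolding expected_mu_def realization_def by (intro integral_mono integrable_sample) auto
  thus ?thesis by simp
qed

lemma deficit_le:
  assumes "(19/25) * real t ^ 2 * p + 2 \<le> real n * (8/25000)" and "0 < n"
  shows "real n - expected_mu p (graph n) \<le> real s + 1000 * real t ^ 3 / 3 + real n * (1 - p) ^ Suc s"
  using expected_mu_ge[of n s] expectation_shortfall_bound[OF assms] by linarith

lemma deficit_small_o: "(\<lambda>n. real n - expected_mu p (graph n)) \<in> o(\<lambda>n. real n)"
proof (rule landau_o.smallI)
  fix c :: real assume c: "0 < c"
  obtain s where "(1 - p) ^ s < c / 2"
    using real_arch_pow_inv[of "c / 2" "1 - p"] c p_pos p_less_1 by auto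
  moreover have "(1 - p) ^ Suc s \<le> (1 - p) ^ s"
    using p_pos p_less_1 by (intro power_decreasing) auto
  ultimately have s: "(1 - p) ^ Suc s \<le> c / 2" by simp
  define K where "K = real s + 1000 * real t ^ 3 / 3"
  have large: "\<forall>\<^sub>F n in sequentially. C \<le> real n" for C
    using filterlim_real_sequentially unfolding filterlim_at_top by blast
  show "\<forall>\<^sub>F n in sequentially. norm (real n - expected_mu p (graph n)) \<le> c * norm (real n)"
    using large[of "((19/25) * real t ^ 2 * p + 2) * (25000/8)"] large[of 1] large[of "K / (c / 2)"]
  proof eventually_elim
    case (elim n)
    hence "real n - expected_mu p (graph n) \<le> K + real n * (1 - p) ^ Suc s"
      unfolding K_def by (intro deficit_le) (auto simp: field_simps)
    also have "\<dots> \<le> c / 2 * real n + real n * (c / 2)"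
      using elim c s by (intro add_mono mult_left_mono) (auto simp: field_simps)
    finally show ?case using expected_mu_le[of n] by simp
  qed
qed

section \<open>Large \<open>b\<close>-matchings\<close>

lemma card_b_matching_le:
  assumes M: "M \<subseteq> graph n" and bm: "b_matching b M"
  shows "card M \<le> 2 * b * hubs n + card (blocks n)"
proof -
  have fin: "finite M" using M finite_graph by (rule finite_subset)
  have hubs: "card {core n..<n} = hubs n"
    using hubs_bounds(1)[of n] by (simp add: core_def)
  have fst_bound: "card {e\<in>M. fst e \<in> {core n..<n}} \<le> b * hubs n"
    using card_filter_le_mult[of "{core n..<n}" M fst b] bm hubs by (simp add: b_matching_def)
  have snd_bound: "card {e\<in>M. snd e \<in> {core n..<n}} \<le> b * hubs n"
    using card_filter_le_mult[of "{core n..<n}" M snd b] bm hubs by (simp add: b_matching_def)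
  have "M \<subseteq> {e\<in>M. fst e \<in> {core n..<n}} \<union> {e\<in>M. snd e \<in> {core n..<n}} \<union> blocks n"
    using M unfolding graph_def by auto
  hence "card M \<le> card ({e\<in>M. fst e \<in> {core n..<n}} \<union> {e\<in>M. snd e \<in> {core n..<n}} \<union> blocks n)"
    using fin finite_blocks by (intro card_mono) auto
  also have "\<dots> \<le> card {e\<in>M. fst e \<in> {core n..<n}} + card {e\<in>M. snd e \<in> {core n..<n}} + card (blocks n)"
    using card_Un_le[of "{e\<in>M. fst e \<in> {core n..<n}}" "{e\<in>M. snd e \<in> {core n..<n}}"]
      card_Un_le[of "{e\<in>M. fst e \<in> {core n..<n}} \<union> {e\<in>M. snd e \<in> {core n..<n}}" "blocks n"]
    by linarith
  finally show ?thesis using fst_bound snd_bound by simp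
qed

lemma no_large_b_matching:
  assumes "0 < n" "2 / p \<le> real b" "M \<subseteq> graph n" "b_matching b M"
  shows "real (card M) < 0.99 * real b * real n"
proof -
  have "real (card M) \<le> real (2 * b * hubs n + card (blocks n))"
    using card_b_matching_le[OF assms(3,4)] by (simp only: of_nat_le_iff)
  hence "real (card M) \<le> 2 * real b * real (hubs n) + real (card (blocks n))"
    by simp
  moreover have "2 * real b * real (hubs n) \<le> 2 * real b * ((12/25) * real n)"
    using hubs_bounds(1)[of n] by (intro mult_left_mono) auto
  moreover have "2 * real (card (blocks n)) \<le> (real b * p) * real (card (blocks n))"
    using assms(2) p_pos by (intro mult_right_mono) (auto simp: field_simps)
  moreover have "real (card (blocks n)) * p \<le> 57/1000 * real n"
    using nblocks_bounds(1)[of n] by (simp add: card_blocks power2_eq_square mult_ac)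
  hence "real b * (real (card (blocks n)) * p) \<le> real b * (57/1000 * real n)"
    by (intro mult_left_mono) auto
  moreover have "0 < 2 / p" using p_pos by simp
  hence "0 < real b" using assms(2) by linarith
  hence "0 < real b * real n"
    using assms(1) by simp
  ultimately show ?thesis by (simp add: algebra_simps)
qed

end

theorem mainTheorem10:
  fixes p :: real
  assumes "0 < p" and "p < 1"
  shows "\<exists>G :: nat \<Rightarrow> (nat \<times> nat) set.
           (\<forall>n. G n \<subseteq> {..<n} \<times> {..<n}) \<and>
           (\<lambda>n. real n - expected_mu p (G n)) \<in> o(\<lambda>n. real n) \<and>
           (\<forall>\<^sub>F n in sequentially. \<forall>b::nat. real b \<ge> 2 / p \<longrightarrow>
              \<not> (\<exists>M. M \<subseteq> G n \<and> b_matching b M \<and> real (card M) \<ge> 0.99 * real b * real n))"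
proof -
  interpret construction p using assms by unfold_locales
  have "\<forall>\<^sub>F n in sequentially. \<forall>b::nat. real b \<ge> 2 / p \<longrightarrow>
          \<not> (\<exists>M. M \<subseteq> graph n \<and> b_matching b M \<and> real (card M) \<ge> 0.99 * real b * real n)"
    using eventually_gt_at_top[of 0] by eventually_elim (auto dest: no_large_b_matching)
  thus ?thesis using graph_subset deficit_small_o by blast
qed

end
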